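(* Consider an instance $(S,C,T,\mathbf{p},\mathbf{c})$ of the value-dependent DFEP with binary tests ($\ell=2$), where $S$ contains objects of at least two distinct classes. Let $\tau\in T$ be a test minimizing $\max_{i\in\{1,2\}} \frac{c^i(t)}{P(S)-P(S^i_t)}$ over all $t\in T$ (the test chosen by \textsc{DividePairs} at the root), and let $q\in\{1,2\}$ be an index attaining $\max\{c^1(\tau)+Cost_W(S^1_\tau),\; c^2(\tau)+Cost_W(S^2_\tau)\}$, where $Cost_W(G)$ is the worst testing cost of the decision tree produced by \textsc{DividePairs} on $G$. Then $$OPT_W(S)\;\ge\; \frac{c^q(\tau)\,P(S)}{P(S)-P(S^q_\tau)}.$$
   Context: Value-dependent DFEP: $S$ is a finite set of $n$ objects partitioned into classes $C=\{C_1,\dots,C_m\}$; $\mathbf p$ is a probability distribution on $S$; $T$ is a set of tests $t:S\to\{1,\dots,\ell\}$, complete in the sense that any two distinct objects are distinguished by some test; each test $t$ has $\ell$ costs $c^1(t),\dots,c^\ell(t)\in\mathbb{Q}^+$, and applying $t$ to object $s$ costs $c^{t(s)}(t)$. For $G\subseteq S$, $G^i_t=\{s\in G: t(s)=i\}$. A decision tree for $G$ is a leaf labeled with a class if all objects of $G$ are in that class; otherwise its root is labeled with a test $t$ and its children are decision trees for the nonempty sets $G^i_t$. For an object $s$, $cost(D,s)$ is the sum of $c^{t(s)}(t)$ over the tests $t$ on the root-to-leaf path of $s$ in $D$; $cost_W(D)=\max_s cost(D,s)$, and $OPT_W(G)$ is the minimum of $cost_W(D)$ over decision trees $D$ for $G$.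 A pair of objects is separable if they lie in different classes; $P(G)$ is the number of separable pairs in $G$, i.e. $P(G)=\sum_{i<j} n_in_j$ where $n_i$ is the number of objects of $G$ in class $i$. A ratio with zero denominator is taken as $+\infty$. Algorithm \textsc{DividePairs} on a set $G$: if all objects of $G$ are in the same class, return a leaf; otherwise choose a test $t$ minimizing $\max_{1\le i\le\ell} c^i(t)/(P(G)-P(G^i_t))$, make it the root, and recursively build the subtrees for each nonempty $G^i_t$. *)

theory Defs
  imports "HOL-Library.Extended_Real"
begin

datatype ('a, 'c) dtree = Leaf 'c | Node "'a \<Rightarrow> nat" "nat \<Rightarrow> ('a, 'c) dtree"

definition part :: "'a set \<Rightarrow> ('a \<Rightarrow> nat) \<Rightarrow> nat \<Rightarrow> 'a set" where
  "part G t i = {s \<in> G. t s = i}"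

definition sep_pairs :: "('a \<Rightarrow> 'c) \<Rightarrow> 'a set \<Rightarrow> nat" where
  "sep_pairs cls G = card {{x, y} | x y. x \<in> G \<and> y \<in> G \<and> cls x \<noteq> cls y}"

text \<open>Cost of classifying object s with tree D; c t i is the cost of test t on outcome i.\<close>
primrec cost :: "(('a \<Rightarrow> nat) \<Rightarrow> nat \<Rightarrow> real) \<Rightarrow> ('a, 'c) dtree \<Rightarrow> 'a \<Rightarrow> real" where
  "cost c (Leaf k) s = 0"
| "cost c (Node t f) s = c t (t s) + cost c (f (t s)) s"

definition cost_W :: "(('a \<Rightarrow> nat) \<Rightarrow> nat \<Rightarrow> real) \<Rightarrow> ('a, 'c) dtree \<Rightarrow> 'a set \<Rightarrow> real" where
  "cost_W c D G = Max ((\<lambda>s. cost c D s) ` G)"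

inductive is_dtree :: "('a \<Rightarrow> 'c) \<Rightarrow> ('a \<Rightarrow> nat) set \<Rightarrow> 'a set \<Rightarrow> ('a, 'c) dtree \<Rightarrow> bool"
  for cls T where
  leaf: "(\<forall>s\<in>G. cls s = k) \<Longrightarrow> is_dtree cls T G (Leaf k)"
| node: "\<not> (\<exists>k. \<forall>s\<in>G. cls s = k) \<Longrightarrow> t \<in> T \<Longrightarrow>
         (\<forall>i. part G t i \<noteq> {} \<longrightarrow> is_dtree cls T (part G t i) (f i)) \<Longrightarrow>
         is_dtree cls T G (Node t f)"

definition OPT_W :: "('a \<Rightarrow> 'c) \<Rightarrow> ('a \<Rightarrow> nat) set \<Rightarrow> (('a \<Rightarrow> nat) \<Rightarrow> nat \<Rightarrow> real) \<Rightarrow> 'a set \<Rightarrow> real" where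
  "OPT_W cls T c G = Inf {cost_W c D G | D. is_dtree cls T G D}"

text \<open>The ratio c^i(t)/(P(G)-P(G^i_t)), +infinity when the denominator is 0.\<close>
definition ratio :: "('a \<Rightarrow> 'c) \<Rightarrow> (('a \<Rightarrow> nat) \<Rightarrow> nat \<Rightarrow> real) \<Rightarrow> 'a set \<Rightarrow> ('a \<Rightarrow> nat) \<Rightarrow> nat \<Rightarrow> ereal" where
  "ratio cls c G t i =
     (let d = real (sep_pairs cls G) - real (sep_pairs cls (part G t i))
      in if d = 0 then \<infinity> else ereal (c t i / d))"

definition ratio2 :: "('a \<Rightarrow> 'c) \<Rightarrow> (('a \<Rightarrow> nat) \<Rightarrow> nat \<Rightarrow> real) \<Rightarrow> 'a set \<Rightarrow> ('a \<Rightarrow> nat) \<Rightarrow> ereal" where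
  "ratio2 cls c G t = max (ratio cls c G t 1) (ratio cls c G t 2)"

text \<open>Trees that DividePairs (binary case, any tie-breaking) may produce on G.\<close>
inductive dp_tree :: "('a \<Rightarrow> 'c) \<Rightarrow> ('a \<Rightarrow> nat) set \<Rightarrow> (('a \<Rightarrow> nat) \<Rightarrow> nat \<Rightarrow> real) \<Rightarrow> 'a set \<Rightarrow> ('a, 'c) dtree \<Rightarrow> bool"
  for cls T c where
  leaf: "(\<forall>s\<in>G. cls s = k) \<Longrightarrow> dp_tree cls T c G (Leaf k)"
| node: "\<not> (\<exists>k. \<forall>s\<in>G. cls s = k) \<Longrightarrow> t \<in> T \<Longrightarrow>
         (\<forall>t'\<in>T. ratio2 cls c G t \<le> ratio2 cls c G t') \<Longrightarrow>
         (\<forall>i. part G t i \<noteq> {} \<longrightarrow> dp_tree cls T c (part G t i) (f i)) \<Longrightarrow>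
         dp_tree cls T c G (Node t f)"

end

theory Submission
  imports Defs
begin

text \<open>Let \<open>\<rho> = c\<^sup>q(\<tau>) / (P(S) - P(S\<^sup>q\<^sub>\<tau>))\<close>. By the choice of \<open>\<tau>\<close>, every test \<open>t\<close> has an outcome \<open>i\<close>
  whose cost is at least \<open>\<rho>\<close> times the number of separable pairs that outcome \<open>i\<close> separates.
  In any decision tree, following such expensive outcomes (or the unique outcome, if the
  test does not split the current set) leads to an object whose path pays \<open>\<rho>\<close> per separated
  pair; since all \<open>P(S)\<close> pairs must be separated, its cost is at least \<open>\<rho> P(S)\<close>.\<close>

definition sep_pair_set :: "('a \<Rightarrow> 'c) \<Rightarrow> 'a set \<Rightarrow> 'a set set" where
  "sep_pair_set cls G = {{x, y} | x y. x \<in> G \<and> y \<in> G \<and> cls x \<noteq> cls y}"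

definition sep_gain :: "('a \<Rightarrow> 'c) \<Rightarrow> 'a set \<Rightarrow> ('a \<Rightarrow> nat) \<Rightarrow> nat \<Rightarrow> real" where
  "sep_gain cls G t i = real (sep_pairs cls G) - real (sep_pairs cls (part G t i))"

lemma sep_pairs_eq_card: "sep_pairs cls G = card (sep_pair_set cls G)"
  by (simp add: sep_pairs_def sep_pair_set_def)

lemma finite_sep_pair_set:
  assumes "finite G"
  shows "finite (sep_pair_set cls G)"
proof -
  have "sep_pair_set cls G \<subseteq> (\<lambda>(x, y). {x, y}) ` (G \<times> G)"
    unfolding sep_pair_set_def by auto
  then show ?thesis
    using assms by (meson finite_SigmaI finite_imageI finite_subset)
qed

lemma sep_pair_set_mono: "A \<subseteq> B \<Longrightarrow> sep_pair_set cls A \<subseteq> sep_pair_set cls B"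
  unfolding sep_pair_set_def by blast

lemma sep_pair_set_Int:
  "sep_pair_set cls (A \<inter> B) = sep_pair_set cls A \<inter> sep_pair_set cls B"
proof
  show "sep_pair_set cls (A \<inter> B) \<subseteq> sep_pair_set cls A \<inter> sep_pair_set cls B"
    by (simp add: sep_pair_set_mono)
  show "sep_pair_set cls A \<inter> sep_pair_set cls B \<subseteq> sep_pair_set cls (A \<inter> B)"
    unfolding sep_pair_set_def by (auto simp: doubleton_eq_iff) blast+
qed

lemma part_subset: "part G t i \<subseteq> G"
  unfolding part_def by auto

lemma part_subset_eq_Int: "G \<subseteq> S \<Longrightarrow> part G t i = G \<inter> part S t i"
  unfolding part_def by auto

lemma sep_gain_eq_card:
  assumes "finite G"
  shows "sep_gain cls G t i
           = real (card (sep_pair_set cls G - sep_pair_set cls (part G t i)))"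
proof -
  have sub: "sep_pair_set cls (part G t i) \<subseteq> sep_pair_set cls G"
    by (rule sep_pair_set_mono[OF part_subset])
  have fin: "finite (sep_pair_set cls G)"
    using assms by (rule finite_sep_pair_set)
  then have "card (sep_pair_set cls (part G t i)) \<le> card (sep_pair_set cls G)"
    using sub by (rule card_mono)
  then show ?thesis
    using finite_subset[OF sub fin]
    by (simp add: sep_gain_def sep_pairs_eq_card card_Diff_subset[OF _ sub] of_nat_diff)
qed

lemma sep_gain_nonneg: "finite G \<Longrightarrow> 0 \<le> sep_gain cls G t i"
  by (simp add: sep_gain_eq_card)

text \<open>A pair of \<open>G\<close> separated by outcome \<open>i\<close> is also a pair of \<open>S\<close> separated by it, because
  \<open>G\<^sup>i\<^sub>t = G \<inter> S\<^sup>i\<^sub>t\<close> and separable pairs of an intersection are those of both sets.\<close>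
lemma sep_gain_mono:
  assumes "G \<subseteq> S" "finite S"
  shows "sep_gain cls G t i \<le> sep_gain cls S t i"
proof -
  have "sep_pair_set cls G - sep_pair_set cls (part G t i)
          = sep_pair_set cls G - sep_pair_set cls (part S t i)"
    using part_subset_eq_Int[OF assms(1)] by (auto simp: sep_pair_set_Int)
  also have "\<dots> \<subseteq> sep_pair_set cls S - sep_pair_set cls (part S t i)"
    using sep_pair_set_mono[OF assms(1)] by blast
  finally have "card (sep_pair_set cls G - sep_pair_set cls (part G t i))
      \<le> card (sep_pair_set cls S - sep_pair_set cls (part S t i))"
    using finite_sep_pair_set[OF assms(2)] by (meson card_mono finite_Diff)
  moreover have "finite G"
    using assms finite_subset by blast
  ultimately show ?thesis
    using assms(2) by (simp add: sep_gain_eq_card)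
qed

lemma sep_gain_part_eq: "part G t i = G \<Longrightarrow> sep_gain cls G t i = 0"
  by (simp add: sep_gain_def)

lemma ratio_eq:
  "ratio cls c G t i
     = (if sep_gain cls G t i = 0 then \<infinity> else ereal (c t i / sep_gain cls G t i))"
  by (simp add: ratio_def sep_gain_def Let_def)

lemma ratio_ge: "ereal (c t i / sep_gain cls G t i) \<le> ratio cls c G t i"
  by (simp add: ratio_eq)

lemma le_ratio_imp_gain_le_cost:
  assumes "ereal \<rho> \<le> ratio cls c G t i" "finite G" "0 \<le> c t i"
  shows "\<rho> * sep_gain cls G t i \<le> c t i"
proof (cases "sep_gain cls G t i = 0")
  case False
  then have "0 < sep_gain cls G t i"
    using sep_gain_nonneg[OF assms(2), of cls t i] by simp
  moreover have "\<rho> \<le> c t i / sep_gain cls G t i"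
    using assms(1) False by (simp add: ratio_eq)
  ultimately show ?thesis
    by (simp add: pos_le_divide_eq)
qed (use assms(3) in simp)

lemma le_ratio2_imp_gain_le_cost:
  assumes "ereal \<rho> \<le> ratio2 cls c G t" "finite G" "0 \<le> c t 1" "0 \<le> c t 2"
  shows "\<exists>i\<in>{1, 2}. \<rho> * sep_gain cls G t i \<le> c t i"
proof -
  obtain i where "i \<in> {1, 2}" "ereal \<rho> \<le> ratio cls c G t i"
    using assms(1) unfolding ratio2_def by (metis insertI1 insertI2 max_def)
  then show ?thesis
    using le_ratio_imp_gain_le_cost assms(2-4) by blast
qed

text \<open>If the expensive outcome \<open>i\<close> for \<open>S\<close> is empty on \<open>G\<close>, the other outcome contains all
  of \<open>G\<close> and separates nothing.\<close>
lemma exists_outcome_gain_le_cost: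
  assumes "G \<subseteq> S" "finite S" "G \<noteq> {}" "0 \<le> \<rho>"
    and binary: "\<forall>s\<in>G. t s \<in> {1, 2}" and cost_nonneg: "\<forall>j\<in>{1, 2}. 0 \<le> c t j"
    and i: "i \<in> {1, 2}" "\<rho> * sep_gain cls S t i \<le> c t i"
  shows "\<exists>j. part G t j \<noteq> {} \<and> \<rho> * sep_gain cls G t j \<le> c t j"
proof (cases "part G t i = {}")
  case False
  have "\<rho> * sep_gain cls G t i \<le> \<rho> * sep_gain cls S t i"
    using sep_gain_mono[OF assms(1,2)] assms(4) by (rule mult_left_mono)
  with False i(2) show ?thesis
    by auto
next
  case True
  define j :: nat where "j = 3 - i"
  have "t s = j" if "s \<in> G" for s
  proof -
    have "t s \<in> {1, 2}" "t s \<noteq> i"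
      using that binary True unfolding part_def by auto
    then show ?thesis
      using i(1) unfolding j_def by auto
  qed
  then have "part G t j = G"
    unfolding part_def by auto
  moreover have "0 \<le> c t j"
    using cost_nonneg i(1) unfolding j_def by auto
  ultimately show ?thesis
    using assms(3) sep_gain_part_eq[of G t j cls] by (intro exI[of _ j]) simp
qed

lemma worst_cost_ge_sep_pairs:
  assumes "is_dtree cls T G D" "G \<subseteq> S" "G \<noteq> {}"
    and "finite S" "0 \<le> \<rho>"
    and expensive: "\<forall>t\<in>T. \<exists>i\<in>{1, 2}. \<rho> * sep_gain cls S t i \<le> c t i"
    and binary: "\<forall>t\<in>T. \<forall>s\<in>S. t s \<in> {1, 2}"
    and cost_nonneg: "\<forall>t\<in>T. \<forall>i\<in>{1, 2}. 0 \<le> c t i"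
  shows "\<exists>s\<in>G. \<rho> * real (sep_pairs cls G) \<le> cost c D s"
  using assms(1-3)
proof (induction rule: is_dtree.induct)
  case (leaf G k)
  then have "sep_pair_set cls G = {}"
    unfolding sep_pair_set_def by auto
  with leaf.prems show ?case
    by (auto simp: sep_pairs_eq_card)
next
  case (node G t f)
  obtain i where i: "i \<in> {1, 2}" "\<rho> * sep_gain cls S t i \<le> c t i"
    using expensive node.hyps(2) by blast
  have "\<forall>s\<in>G. t s \<in> {1, 2}"
    using binary node.hyps(2) node.prems(1) by blast
  moreover have "\<forall>j\<in>{1, 2}. 0 \<le> c t j"
    using cost_nonneg node.hyps(2) by blast
  ultimately obtain j where j: "part G t j \<noteq> {}" "\<rho> * sep_gain cls G t j \<le> c t j"
    using exists_outcome_gain_le_cost[OF node.prems(1) \<open>finite S\<close> node.prems(2) \<open>0 \<le> \<rho>\<close>] i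
    by blast
  moreover have "part G t j \<subseteq> S"
    using part_subset node.prems(1) by (rule subset_trans)
  ultimately obtain s where s: "s \<in> part G t j"
    "\<rho> * real (sep_pairs cls (part G t j)) \<le> cost c (f j) s"
    using node.IH by blast
  then have "s \<in> G" "t s = j"
    unfolding part_def by auto
  moreover have "\<rho> * real (sep_pairs cls G) \<le> cost c (Node t f) s"
    using j(2) s(2) \<open>t s = j\<close> by (simp add: sep_gain_def algebra_simps)
  ultimately show ?case
    by blast
qed

lemma OPT_W_ge_sep_pairs:
  assumes "is_dtree cls T S D" "finite S" "S \<noteq> {}" "0 \<le> \<rho>"
    and "\<forall>t\<in>T. \<exists>i\<in>{1, 2}. \<rho> * sep_gain cls S t i \<le> c t i"
    and "\<forall>t\<in>T. \<forall>s\<in>S. t s \<in> {1, 2}"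
    and "\<forall>t\<in>T. \<forall>i\<in>{1, 2}. 0 \<le> c t i"
  shows "\<rho> * real (sep_pairs cls S) \<le> OPT_W cls T c S"
  unfolding OPT_W_def
proof (rule cInf_greatest)
  show "{cost_W c D S |D. is_dtree cls T S D} \<noteq> {}"
    using assms(1) by blast
next
  fix x assume "x \<in> {cost_W c D S |D. is_dtree cls T S D}"
  then obtain E where E: "is_dtree cls T S E" "x = cost_W c E S"
    by blast
  obtain s where s: "s \<in> S" "\<rho> * real (sep_pairs cls S) \<le> cost c E s"
    using worst_cost_ge_sep_pairs[OF E(1) _ assms(3,2,4-7)] by blast
  have "cost c E s \<le> cost_W c E S"
    using \<open>finite S\<close> s(1) by (simp add: cost_W_def)
  with s(2) E(2) show "\<rho> * real (sep_pairs cls S) \<le> x"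
    by linarith
qed

lemma binary_is_dtree_Node:
  assumes "\<not> (\<exists>k. \<forall>s\<in>G. cls s = k)" "t \<in> T" "\<forall>s\<in>G. t s \<in> {1, 2}"
    and "\<forall>i\<in>{1, 2}. is_dtree cls T (part G t i) (f i)"
  shows "is_dtree cls T G (Node t f)"
proof (rule is_dtree.node[OF assms(1,2)])
  show "\<forall>i. part G t i \<noteq> {} \<longrightarrow> is_dtree cls T (part G t i) (f i)"
  proof (intro allI impI)
    fix i assume "part G t i \<noteq> {}"
    then have "i \<in> {1, 2}"
      using assms(3) unfolding part_def by auto
    then show "is_dtree cls T (part G t i) (f i)"
      using assms(4) by blast
  qed
qed

lemma dp_tree_is_dtree: "dp_tree cls T c G D \<Longrightarrow> is_dtree cls T G D"
  by (induction rule: dp_tree.induct) (auto intro!: is_dtree.node is_dtree.leaf)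

theorem lemma1:
  fixes S :: "'a set" and cls :: "'a \<Rightarrow> 'c" and T :: "('a \<Rightarrow> nat) set"
    and p :: "'a \<Rightarrow> real" and c :: "('a \<Rightarrow> nat) \<Rightarrow> nat \<Rightarrow> real"
    and \<tau> :: "'a \<Rightarrow> nat" and D :: "nat \<Rightarrow> ('a, 'c) dtree" and q :: nat
  assumes finS: "finite S" and finT: "finite T"
    and prob: "\<forall>s\<in>S. p s \<ge> 0" "sum p S = 1"
    and binary: "\<forall>t\<in>T. \<forall>s\<in>S. t s \<in> {1, 2}"
    and costs: "\<forall>t\<in>T. \<forall>i\<in>{1, 2}. c t i > 0 \<and> c t i \<in> \<rat>"
    and complete: "\<forall>x\<in>S. \<forall>y\<in>S. x \<noteq> y \<longrightarrow> (\<exists>t\<in>T. t x \<noteq> t y)"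
    and two_classes: "\<exists>x\<in>S. \<exists>y\<in>S. cls x \<noteq> cls y"
    and tau: "\<tau> \<in> T" "\<forall>t\<in>T. ratio2 cls c S \<tau> \<le> ratio2 cls c S t"
    and subtrees: "\<forall>i\<in>{1, 2}. dp_tree cls T c (part S \<tau> i) (D i)"
    and q: "q \<in> {1, 2}"
      "\<forall>i\<in>{1, 2}. c \<tau> i + cost_W c (D i) (part S \<tau> i) \<le> c \<tau> q + cost_W c (D q) (part S \<tau> q)"
  shows "OPT_W cls T c S \<ge>
           c \<tau> q * real (sep_pairs cls S) / (real (sep_pairs cls S) - real (sep_pairs cls (part S \<tau> q)))"
proof -
  \<comment> \<open>If the gain is \<open>0\<close>, then \<open>\<rho> = 0\<close> (division by zero) and the ratio is \<open>\<infinity>\<close>.\<close>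
  define \<rho> where "\<rho> = c \<tau> q / sep_gain cls S \<tau> q"
  have cost_nonneg: "\<forall>t\<in>T. \<forall>i\<in>{1, 2}. 0 \<le> c t i"
    using costs by (auto intro: less_imp_le)
  have "0 \<le> \<rho>"
    using cost_nonneg tau(1) q(1) sep_gain_nonneg[OF finS]
    unfolding \<rho>_def by (intro divide_nonneg_nonneg) auto
  have "ereal \<rho> \<le> ratio cls c S \<tau> q"
    unfolding \<rho>_def by (rule ratio_ge)
  also have "\<dots> \<le> ratio2 cls c S \<tau>"
    using q(1) by (auto simp: ratio2_def)
  finally have \<rho>_le_ratio2: "ereal \<rho> \<le> ratio2 cls c S \<tau>" .
  have expensive: "\<forall>t\<in>T. \<exists>i\<in>{1, 2}. \<rho> * sep_gain cls S t i \<le> c t i"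
  proof
    fix t assume "t \<in> T"
    then show "\<exists>i\<in>{1, 2}. \<rho> * sep_gain cls S t i \<le> c t i"
      using le_ratio2_imp_gain_le_cost[OF order_trans[OF \<rho>_le_ratio2 tau(2)[rule_format]] finS]
        cost_nonneg by simp
  qed
  have "\<forall>i\<in>{1, 2}. is_dtree cls T (part S \<tau> i) (D i)"
    using subtrees dp_tree_is_dtree by blast
  moreover have "\<not> (\<exists>k. \<forall>s\<in>S. cls s = k)"
    using two_classes by metis
  ultimately have "is_dtree cls T S (Node \<tau> D)"
    using tau(1) binary by (intro binary_is_dtree_Node) auto
  then have "\<rho> * real (sep_pairs cls S) \<le> OPT_W cls T c S"
    using finS two_classes \<open>0 \<le> \<rho>\<close> expensive binary cost_nonneg
    by (intro OPT_W_ge_sep_pairs) auto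
  then show ?thesis
    by (simp add: \<rho>_def sep_gain_def)
qed

end
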